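(* Let $\mathbf{X}$ be a finitely supported real random variable with $\mathbf{E}[\mathbf{X}]=0$ and $\mathrm{Var}[\mathbf{X}]=1$. Let $q_1(x_1,\dots,x_{ds})$ be a multilinear polynomial of degree at most $d$ with $\|q_1\|_{\mathrm{coeff}}=1$, and let $q_2(x_1,\dots,x_N)$ (with $N\ge ds$) be a multilinear polynomial of degree at most $d$ such that $\|q_1-q_2\|_{\mathrm{coeff}}\le\eta\le1$ (viewing both as polynomials in $x_1,\dots,x_N$). Then for any positive integer $k$ there exists a value $\xi_{k,d,\mathbf{X}}$, depending only on $k$, $d$ and $\mathbf{X}$, such that \[ \mathrm{Mom}_k\big(q_1(\mathbf{X}^{\otimes ds}),q_2(\mathbf{X}^{\otimes N})\big)\le\xi_{k,d,\mathbf{X}}\cdot\eta . \]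
   Context: A multilinear polynomial of degree at most $d$ is $p(x)=\sum_{|S|\le d}\widehat{p}(S)\prod_{i\in S}x_i$ and $\|p\|_{\mathrm{coeff}}=(\sum_S\widehat{p}(S)^2)^{1/2}$. For real random variables $\mathbf{Y},\mathbf{Z}$ with finite moments, $\mathrm{Mom}_k(\mathbf{Y},\mathbf{Z})=\big(\sum_{i=1}^k(\mathbf{E}[\mathbf{Y}^i]-\mathbf{E}[\mathbf{Z}^i])^2\big)^{1/2}$. $\mathbf{X}^{\otimes m}$ is a vector of $m$ i.i.d. copies of $\mathbf{X}$. *)

theory Defs
  imports "HOL-Probability.Probability"
begin

text \<open>A multilinear polynomial in variables x_0,...,x_(n-1) is represented by its
  coefficient function on finite sets of variable indices.\<close>

definition is_mlpoly :: "nat \<Rightarrow> nat \<Rightarrow> (nat set \<Rightarrow> real) \<Rightarrow> bool" where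
  "is_mlpoly n d c \<longleftrightarrow> (\<forall>S. c S \<noteq> 0 \<longrightarrow> S \<subseteq> {..<n} \<and> card S \<le> d)"

definition mpoly_eval :: "nat \<Rightarrow> (nat set \<Rightarrow> real) \<Rightarrow> (nat \<Rightarrow> real) \<Rightarrow> real" where
  "mpoly_eval n c x = (\<Sum>S\<in>Pow {..<n}. c S * (\<Prod>i\<in>S. x i))"

definition coeff_norm :: "nat \<Rightarrow> (nat set \<Rightarrow> real) \<Rightarrow> real" where
  "coeff_norm n c = sqrt (\<Sum>S\<in>Pow {..<n}. (c S)^2)"

definition poly_dist :: "real pmf \<Rightarrow> nat \<Rightarrow> (nat set \<Rightarrow> real) \<Rightarrow> real pmf" where
  "poly_dist X n c = map_pmf (mpoly_eval n c) (Pi_pmf {..<n} 0 (\<lambda>_. X))"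

definition Mom :: "nat \<Rightarrow> real pmf \<Rightarrow> real pmf \<Rightarrow> real" where
  "Mom k Y Z = sqrt (\<Sum>i=1..k. (measure_pmf.expectation Y (\<lambda>y. y ^ i)
                                 - measure_pmf.expectation Z (\<lambda>z. z ^ i))^2)"

end

theory Submission
  imports Defs
begin

text \<open>
  For independent centred variables bounded by \<open>M \<ge> 1\<close> and \<open>K \<ge> 2^(q+1) M^q\<close>, the expectation
  of a product of \<open>q\<close> multilinear polynomials is bounded by the product of their weighted norms
  \<open>sqrt (\<Sum>S. K^|S| c(S)^2)\<close>. This is proved by induction on the variables: writing each factor
  as \<open>x_j A_t + B_t\<close> and integrating out \<open>x_j\<close>, the first moment vanishes, the \<open>n\<close>-th is at most
  \<open>M^n\<close>, and an elementary inequality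
  \<open>\<Sum>T\<subseteq>Q. w |T| \<Prod>T a \<Prod>(Q-T) b \<le> \<Prod>t\<in>Q. sqrt (K a_t^2 + b_t^2)\<close> (with \<open>w 1 = 0\<close>,
  \<open>w n = M^n\<close> otherwise) closes the induction. For degree \<open>d\<close> the weighted norm is at most
  \<open>K^(d/2)\<close> times the coefficient norm, so writing \<open>q1^i - q2^i\<close> as a telescoping sum of products
  \<open>q1^j (q1 - q2) q2^(i-1-j)\<close> bounds the \<open>i\<close>-th moment difference by \<open>i (2 K^(d/2))^i \<eta>\<close>.
\<close>

definition moment_majorant :: "real \<Rightarrow> nat \<Rightarrow> real" where
  "moment_majorant M n = (if n = 1 then 0 else M ^ n)"

lemma one_le_of_two_pow_mult_pow_le:
  fixes M K :: real
  assumes "M \<ge> 1" "K \<ge> 2 ^ (n + 1) * M ^ n"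
  shows "K \<ge> 1"
proof -
  have "(1::real) \<le> 2 ^ (n + 1) * M ^ n"
    using mult_mono[of 1 "2 ^ (n + 1)" 1 "M ^ n"] one_le_power[of "2::real" "n + 1"]
      one_le_power[OF assms(1), of n] by simp
  then show ?thesis using assms(2) by linarith
qed

lemma prod_if_mem:
  assumes "finite Q" "T \<subseteq> Q"
  shows "(\<Prod>t\<in>Q. if t \<in> T then f t else g t) = prod f T * prod g (Q - T)"
proof -
  have "(\<Prod>t\<in>Q. if t \<in> T then f t else g t) = prod f (Q \<inter> {t. t \<in> T}) * prod g (Q \<inter> - {t. t \<in> T})"
    using assms(1) by (rule prod.If_cases)
  also have "Q \<inter> {t. t \<in> T} = T" using assms(2) by auto
  also have "Q \<inter> - {t. t \<in> T} = Q - T" by auto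
  finally show ?thesis .
qed

lemma le_one_minus_half_of_add_square_eq_one:
  fixes x y :: real
  assumes "0 \<le> y" "x + y\<^sup>2 = 1" "0 \<le> x"
  shows "y \<le> 1 - x / 2"
proof -
  have "y\<^sup>2 \<le> 1" using assms(2,3) by linarith
  then have "y \<le> 1" using assms(1) by (simp add: power_le_one_iff)
  have "x = (1 - y) * (1 + y)" using assms(2) by (simp add: algebra_simps power2_eq_square)
  also have "\<dots> \<le> (1 - y) * 2" using \<open>y \<le> 1\<close> assms(1) by (intro mult_left_mono) auto
  finally show ?thesis by simp
qed

lemma moment_majorant_term_le:
  fixes a b :: "'a \<Rightarrow> real"
  assumes Q: "finite Q" and T: "T \<subseteq> Q" "T \<noteq> {}" and M: "M \<ge> 1"
    and a: "\<And>t. t \<in> Q \<Longrightarrow> 0 \<le> a t \<and> a t \<le> U" and U: "U \<le> 1"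
    and b: "\<And>t. t \<in> Q \<Longrightarrow> 0 \<le> b t \<and> b t \<le> 1"
  shows "moment_majorant M (card T) * (prod a T * prod b (Q - T)) \<le> M ^ card Q * U\<^sup>2"
proof (cases "card T = 1")
  case False
  have "finite T" using T Q finite_subset by auto
  with False T have "card T \<ge> 2" by (metis One_nat_def card_0_eq less_2_cases not_le)
  obtain t where "t \<in> T" using T by blast
  then have "0 \<le> U" using a T by force
  have "prod a T \<le> U ^ card T"
    using prod_mono[of T a "\<lambda>_. U"] a T by (auto simp: subset_iff)
  also have "\<dots> \<le> U\<^sup>2" using power_decreasing[OF \<open>card T \<ge> 2\<close> \<open>0 \<le> U\<close> U] .
  finally have "prod a T * prod b (Q - T) \<le> U\<^sup>2 * 1"
    using prod_le_1[of "Q - T" b] a b T by (intro mult_mono) (auto intro!: prod_nonneg)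
  moreover have "M ^ card T \<le> M ^ card Q"
    using power_increasing[OF card_mono[OF Q T(1)] M] .
  moreover have "0 \<le> prod a T * prod b (Q - T)"
    using a b T by (auto intro!: mult_nonneg_nonneg prod_nonneg)
  ultimately have "M ^ card T * (prod a T * prod b (Q - T)) \<le> M ^ card Q * U\<^sup>2"
    using M by (intro mult_mono) auto
  then show ?thesis using False by (simp add: moment_majorant_def)
qed (use M in \<open>simp add: moment_majorant_def\<close>)

lemma sum_Pow_moment_majorant_le_one:
  fixes a b :: "'a \<Rightarrow> real"
  assumes Q: "finite Q"
    and nonneg: "\<And>t. t \<in> Q \<Longrightarrow> a t \<ge> 0" "\<And>t. t \<in> Q \<Longrightarrow> b t \<ge> 0"
    and M: "M \<ge> 1" and K: "K \<ge> 2 ^ (card Q + 1) * M ^ card Q"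
    and normalized: "\<And>t. t \<in> Q \<Longrightarrow> K * (a t)\<^sup>2 + (b t)\<^sup>2 = 1"
  shows "(\<Sum>T\<in>Pow Q. moment_majorant M (card T) * (prod a T * prod b (Q - T))) \<le> 1"
proof (cases "Q = {}")
  case False
  define g where "g T = moment_majorant M (card T) * (prod a T * prod b (Q - T))" for T
  have K1: "K \<ge> 1" using one_le_of_two_pow_mult_pow_le[OF M K] .
  have "Max (a ` Q) \<in> a ` Q" using Q False by simp
  then obtain t0 where t0: "t0 \<in> Q" and t0_max: "a t0 = Max (a ` Q)" by auto
  define U where "U = a t0"
  have a_le: "0 \<le> a t \<and> a t \<le> U" if "t \<in> Q" for t
    using nonneg(1)[OF that] Q that by (simp add: U_def t0_max)
  have b_le: "b t \<le> 1 - K * (a t)\<^sup>2 / 2" if "t \<in> Q" for t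
    using nonneg(2)[OF that] normalized[OF that] K1 by (intro le_one_minus_half_of_add_square_eq_one) auto
  have b_le_1: "b t \<le> 1" if "t \<in> Q" for t
  proof -
    have "K * (a t)\<^sup>2 \<ge> 0" using K1 by simp
    then show ?thesis using b_le[OF that] by linarith
  qed
  have "U\<^sup>2 \<le> K * U\<^sup>2" using mult_right_mono[OF K1, of "U\<^sup>2"] by simp
  then have "U\<^sup>2 \<le> 1" using normalized[OF t0] zero_le_power2[of "b t0"] unfolding U_def by linarith
  then have "U \<le> 1" using nonneg(1)[OF t0] by (simp add: U_def power_le_one_iff)
  \<comment> \<open>The empty set contributes at most \<open>1 - K U\<^sup>2 / 2\<close>, the \<open>2 ^ card Q - 1\<close> others at most \<open>M ^ card Q * U\<^sup>2\<close> each.\<close>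
  have "prod b Q = b t0 * prod b (Q - {t0})" using Q t0 by (simp add: prod.remove)
  also have "\<dots> \<le> b t0"
    using prod_le_1[of "Q - {t0}" b] nonneg(2) b_le_1 nonneg(2)[OF t0] by (simp add: mult_left_le)
  finally have empty: "g {} \<le> 1 - K * U\<^sup>2 / 2"
    using b_le[OF t0] by (simp add: g_def moment_majorant_def U_def)
  have "(\<Sum>T\<in>Pow Q. g T) = g {} + (\<Sum>T\<in>Pow Q - {{}}. g T)"
    using Q by (simp add: sum.remove)
  also have "\<dots> \<le> (1 - K * U\<^sup>2 / 2) + (\<Sum>T\<in>Pow Q - {{}}. M ^ card Q * U\<^sup>2)"
    using empty Q M a_le nonneg(2) b_le_1 \<open>U \<le> 1\<close>
    unfolding g_def by (intro add_mono sum_mono moment_majorant_term_le) auto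
  also have "\<dots> \<le> (1 - K * U\<^sup>2 / 2) + (\<Sum>T\<in>Pow Q. M ^ card Q * U\<^sup>2)"
    using Q M by (intro add_left_mono sum_mono2) auto
  also have "\<dots> = 1 - K * U\<^sup>2 / 2 + 2 ^ card Q * M ^ card Q * U\<^sup>2"
    using Q by (simp add: card_Pow)
  also have "\<dots> \<le> 1"
    using mult_right_mono[OF K, of "U\<^sup>2"] by simp
  finally show ?thesis by (simp add: g_def)
qed (simp add: moment_majorant_def)

lemma prod_mult_prod_diff_rescale:
  fixes a b r :: "'a \<Rightarrow> real"
  assumes Q: "finite Q" "T \<subseteq> Q" and r: "\<And>t. t \<in> Q \<Longrightarrow> r t \<noteq> 0"
  shows "prod a T * prod b (Q - T)
           = prod r Q * (prod (\<lambda>t. a t / r t) T * prod (\<lambda>t. b t / r t) (Q - T))"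
proof -
  have "finite T" using Q finite_subset by auto
  then have "prod r T \<noteq> 0" "prod r (Q - T) \<noteq> 0" using Q r by auto
  moreover have "prod r Q = prod r T * prod r (Q - T)"
    using prod.subset_diff[OF Q(2,1)] by (simp add: mult.commute)
  ultimately show ?thesis by (simp add: prod_dividef)
qed

lemma sum_Pow_moment_majorant_le_prod_sqrt:
  fixes a b :: "'a \<Rightarrow> real"
  assumes Q: "finite Q"
    and nonneg: "\<And>t. t \<in> Q \<Longrightarrow> a t \<ge> 0" "\<And>t. t \<in> Q \<Longrightarrow> b t \<ge> 0"
    and M: "M \<ge> 1" and K: "K \<ge> 2 ^ (card Q + 1) * M ^ card Q"
  shows "(\<Sum>T\<in>Pow Q. moment_majorant M (card T) * (prod a T * prod b (Q - T)))
           \<le> (\<Prod>t\<in>Q. sqrt (K * (a t)\<^sup>2 + (b t)\<^sup>2))"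
proof -
  define r where "r t = sqrt (K * (a t)\<^sup>2 + (b t)\<^sup>2)" for t
  have K1: "K \<ge> 1" using one_le_of_two_pow_mult_pow_le[OF M K] .
  have r_sq: "(r t)\<^sup>2 = K * (a t)\<^sup>2 + (b t)\<^sup>2" and r_nonneg: "r t \<ge> 0" for t
    using K1 by (simp_all add: r_def)
  show ?thesis
  proof (cases "\<exists>t\<in>Q. r t = 0")
    case True
    then obtain t where t: "t \<in> Q" "r t = 0" by blast
    then have "K * (a t)\<^sup>2 + (b t)\<^sup>2 = 0" using r_sq[of t] by simp
    moreover have "K * (a t)\<^sup>2 \<ge> 0" using K1 by simp
    ultimately have "K * (a t)\<^sup>2 = 0" "(b t)\<^sup>2 = 0"
      using zero_le_power2[of "b t"] by linarith+
    then have "a t = 0" "b t = 0" using K1 by auto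
    then have "prod a T * prod b (Q - T) = 0" if "T \<in> Pow Q" for T
      using t(1) that Q finite_subset[of T Q] by (cases "t \<in> T") (auto simp: prod_zero_iff)
    then have "(\<Sum>T\<in>Pow Q. moment_majorant M (card T) * (prod a T * prod b (Q - T))) = 0"
      by (intro sum.neutral) simp
    then show ?thesis using r_nonneg by (simp add: r_def prod_nonneg)
  next
    case False
    \<comment> \<open>Both sides are homogeneous of degree one in each pair \<open>(a t, b t)\<close>.\<close>
    have normalized: "K * (a t / r t)\<^sup>2 + (b t / r t)\<^sup>2 = 1" if "t \<in> Q" for t
    proof -
      have "K * (a t / r t)\<^sup>2 + (b t / r t)\<^sup>2 = (K * (a t)\<^sup>2 + (b t)\<^sup>2) / (r t)\<^sup>2"
        by (simp add: power_divide add_divide_distrib)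
      then show ?thesis using False that by (simp add: r_sq[symmetric])
    qed
    have "(\<Sum>T\<in>Pow Q. moment_majorant M (card T) * (prod a T * prod b (Q - T)))
        = prod r Q * (\<Sum>T\<in>Pow Q. moment_majorant M (card T) *
            (prod (\<lambda>t. a t / r t) T * prod (\<lambda>t. b t / r t) (Q - T)))"
      unfolding sum_distrib_left using False
      by (intro sum.cong refl) (simp add: prod_mult_prod_diff_rescale[OF Q] mult.left_commute)
    also have "\<dots> \<le> prod r Q * 1"
      using nonneg r_nonneg
      by (intro mult_left_mono sum_Pow_moment_majorant_le_one[OF Q _ _ M K normalized] prod_nonneg)
        auto
    finally show ?thesis by (simp add: r_def)
  qed
qed

lemma finite_set_pmf_abs_bounded:
  fixes X :: "real pmf"
  assumes "finite (set_pmf X)"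
  obtains M where "M \<ge> 1" "\<And>y. y \<in> set_pmf X \<Longrightarrow> \<bar>y\<bar> \<le> M"
  using assms by (intro that[of "Max (insert 1 (abs ` set_pmf X))"]) auto

lemma abs_moment_le_moment_majorant:
  fixes X :: "real pmf"
  assumes "finite (set_pmf X)" "\<And>y. y \<in> set_pmf X \<Longrightarrow> \<bar>y\<bar> \<le> M"
    and "measure_pmf.expectation X (\<lambda>y. y) = 0"
  shows "\<bar>measure_pmf.expectation X (\<lambda>y. y ^ n)\<bar> \<le> moment_majorant M n"
proof (cases "n = 1")
  case False
  have "\<bar>measure_pmf.expectation X (\<lambda>y. y ^ n)\<bar> \<le> measure_pmf.expectation X (\<lambda>y. \<bar>y ^ n\<bar>)"
    by (rule integral_abs_bound)
  also have "\<dots> \<le> M ^ n"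
    using assms(1,2)
    by (intro measure_pmf.integral_le_const integrable_measure_pmf_finite)
       (auto simp: AE_measure_pmf_iff power_abs intro: power_mono)
  finally show ?thesis using False by (simp add: moment_majorant_def)
qed (use assms(3) in \<open>simp add: moment_majorant_def\<close>)

definition mpoly_eval_on :: "'v set \<Rightarrow> ('v set \<Rightarrow> real) \<Rightarrow> ('v \<Rightarrow> real) \<Rightarrow> real" where
  "mpoly_eval_on I c x = (\<Sum>S\<in>Pow I. c S * (\<Prod>i\<in>S. x i))"

definition weighted_coeff_sqnorm :: "real \<Rightarrow> 'v set \<Rightarrow> ('v set \<Rightarrow> real) \<Rightarrow> real" where
  "weighted_coeff_sqnorm K I c = (\<Sum>S\<in>Pow I. K ^ card S * (c S)\<^sup>2)"

lemma weighted_coeff_sqnorm_nonneg: "K \<ge> 0 \<Longrightarrow> weighted_coeff_sqnorm K I c \<ge> 0"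
  by (simp add: weighted_coeff_sqnorm_def sum_nonneg)

lemma sum_Pow_insert:
  assumes "finite J" "j \<notin> J"
  shows "(\<Sum>S\<in>Pow (insert j J). f S) = (\<Sum>S\<in>Pow J. f (insert j S)) + (\<Sum>S\<in>Pow J. f S)"
proof -
  have "inj_on (insert j) (Pow J)"
    using assms(2) by (intro inj_onI) (metis PowD insert_ident subsetD)
  moreover have "Pow J \<inter> insert j ` Pow J = {}" using assms(2) by auto
  ultimately show ?thesis
    using assms(1) by (simp add: Pow_insert sum.union_disjoint sum.reindex add.commute)
qed

lemma mpoly_eval_on_insert:
  assumes "finite J" "j \<notin> J"
  shows "mpoly_eval_on (insert j J) c (x(j := y))
           = y * mpoly_eval_on J (\<lambda>S. c (insert j S)) x + mpoly_eval_on J c x"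
proof -
  have unchanged: "(\<Prod>i\<in>S. (x(j := y)) i) = (\<Prod>i\<in>S. x i)" if "S \<in> Pow J" for S
    using that assms(2) by (auto intro!: prod.cong)
  then have same: "c S * (\<Prod>i\<in>S. (x(j := y)) i) = c S * (\<Prod>i\<in>S. x i)" if "S \<in> Pow J" for S
    using that by simp
  have ins: "c (insert j S) * (\<Prod>i\<in>insert j S. (x(j := y)) i) = y * (c (insert j S) * (\<Prod>i\<in>S. x i))"
    if "S \<in> Pow J" for S
  proof -
    have "finite S" "j \<notin> S" using that assms finite_subset[of S J] by auto
    then show ?thesis using unchanged[OF that] by (simp add: mult.left_commute)
  qed
  have "mpoly_eval_on (insert j J) c (x(j := y))
      = (\<Sum>S\<in>Pow J. c (insert j S) * (\<Prod>i\<in>insert j S. (x(j := y)) i))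
        + (\<Sum>S\<in>Pow J. c S * (\<Prod>i\<in>S. (x(j := y)) i))"
    unfolding mpoly_eval_on_def by (rule sum_Pow_insert[OF assms])
  also have "\<dots> = (\<Sum>S\<in>Pow J. y * (c (insert j S) * (\<Prod>i\<in>S. x i))) + (\<Sum>S\<in>Pow J. c S * (\<Prod>i\<in>S. x i))"
    by (intro arg_cong2[where f = "(+)"] sum.cong refl) (simp_all only: ins same)
  also have "\<dots> = y * mpoly_eval_on J (\<lambda>S. c (insert j S)) x + mpoly_eval_on J c x"
    unfolding mpoly_eval_on_def sum_distrib_left ..
  finally show ?thesis .
qed

lemma weighted_coeff_sqnorm_insert:
  assumes "finite J" "j \<notin> J"
  shows "weighted_coeff_sqnorm K (insert j J) c
           = K * weighted_coeff_sqnorm K J (\<lambda>S. c (insert j S)) + weighted_coeff_sqnorm K J c"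
proof -
  have ins: "K ^ card (insert j S) * (c (insert j S))\<^sup>2 = K * (K ^ card S * (c (insert j S))\<^sup>2)"
    if "S \<in> Pow J" for S
  proof -
    have "finite S" "j \<notin> S" using that assms finite_subset[of S J] by auto
    then show ?thesis by simp
  qed
  have "weighted_coeff_sqnorm K (insert j J) c
      = (\<Sum>S\<in>Pow J. K ^ card (insert j S) * (c (insert j S))\<^sup>2) + weighted_coeff_sqnorm K J c"
    unfolding weighted_coeff_sqnorm_def by (rule sum_Pow_insert[OF assms])
  also have "\<dots> = K * weighted_coeff_sqnorm K J (\<lambda>S. c (insert j S)) + weighted_coeff_sqnorm K J c"
    unfolding weighted_coeff_sqnorm_def sum_distrib_left by (simp only: ins cong: sum.cong)
  finally show ?thesis .
qed

lemma finite_set_Pi_pmf: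
  assumes "finite I" "\<And>i. i \<in> I \<Longrightarrow> finite (set_pmf (p i))"
  shows "finite (set_pmf (Pi_pmf I dflt p))"
  using assms by (auto simp: set_Pi_pmf)

lemma expectation_pair_pmf_finite:
  fixes f :: "'a \<times> 'b \<Rightarrow> real"
  assumes "finite (set_pmf p)" "finite (set_pmf q)"
  shows "measure_pmf.expectation (pair_pmf p q) f =
         measure_pmf.expectation p (\<lambda>a. measure_pmf.expectation q (\<lambda>b. f (a, b)))"
proof -
  have "measure_pmf.expectation (pair_pmf p q) f
      = (\<Sum>(a, b)\<in>set_pmf p \<times> set_pmf q. f (a, b) * pmf q b * pmf p a)"
    using assms by (subst integral_measure_pmf_real) (auto simp: pmf_pair mult_ac intro!: sum.cong)
  also have "\<dots> = (\<Sum>a\<in>set_pmf p. (\<Sum>b\<in>set_pmf q. f (a, b) * pmf q b) * pmf p a)"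
    by (simp add: sum.cartesian_product sum_distrib_right)
  also have "\<dots> = measure_pmf.expectation p (\<lambda>a. measure_pmf.expectation q (\<lambda>b. f (a, b)))"
    using assms by (simp add: integral_measure_pmf_real)
  finally show ?thesis .
qed

lemma expectation_Pi_pmf_insert:
  fixes f :: "('v \<Rightarrow> 'b) \<Rightarrow> real"
  assumes "finite J" "j \<notin> J" "\<And>i. i \<in> insert j J \<Longrightarrow> finite (set_pmf (p i))"
  shows "measure_pmf.expectation (Pi_pmf (insert j J) dflt p) f
           = measure_pmf.expectation (p j) (\<lambda>y. measure_pmf.expectation (Pi_pmf J dflt p) (\<lambda>x. f (x(j := y))))"
proof -
  have "finite (set_pmf (Pi_pmf J dflt p))"
    using assms by (intro finite_set_Pi_pmf) auto
  then show ?thesis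
    using assms by (simp add: Pi_pmf_insert case_prod_beta' expectation_pair_pmf_finite)
qed

lemma prod_mpoly_eval_on_insert:
  fixes c :: "'a \<Rightarrow> 'v set \<Rightarrow> real"
  assumes J: "finite J" "j \<notin> J" and Q: "finite Q"
  shows "(\<Prod>t\<in>Q. mpoly_eval_on (insert j J) (c t) (x(j := y)))
       = (\<Sum>T\<in>Pow Q. y ^ card T *
            (\<Prod>t\<in>Q. mpoly_eval_on J (if t \<in> T then (\<lambda>S. c t (insert j S)) else c t) x))"
proof -
  let ?A = "\<lambda>t. mpoly_eval_on J (\<lambda>S. c t (insert j S)) x" and ?B = "\<lambda>t. mpoly_eval_on J (c t) x"
  have "(\<Prod>t\<in>Q. mpoly_eval_on (insert j J) (c t) (x(j := y))) = (\<Prod>t\<in>Q. y * ?A t + ?B t)"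
    by (simp add: mpoly_eval_on_insert[OF J])
  also have "\<dots> = (\<Sum>T\<in>Pow Q. (\<Prod>t\<in>T. y * ?A t) * prod ?B (Q - T))"
    by (rule prod_add[OF Q])
  also have "\<dots> = (\<Sum>T\<in>Pow Q. y ^ card T * (\<Prod>t\<in>Q. if t \<in> T then ?A t else ?B t))"
    by (intro sum.cong refl) (simp add: prod.distrib prod_if_mem[OF Q])
  also have "\<dots> = (\<Sum>T\<in>Pow Q. y ^ card T *
            (\<Prod>t\<in>Q. mpoly_eval_on J (if t \<in> T then (\<lambda>S. c t (insert j S)) else c t) x))"
    by (intro sum.cong prod.cong refl arg_cong2[where f = "(*)"]) auto
  finally show ?thesis .
qed

lemma expectation_prod_mpoly_eval_insert:
  fixes p :: "'v \<Rightarrow> real pmf" and c :: "'a \<Rightarrow> 'v set \<Rightarrow> real"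
  assumes J: "finite J" "j \<notin> J" and Q: "finite Q"
    and fin: "\<And>i. i \<in> insert j J \<Longrightarrow> finite (set_pmf (p i))"
  shows "measure_pmf.expectation (Pi_pmf (insert j J) dflt p)
           (\<lambda>x. \<Prod>t\<in>Q. mpoly_eval_on (insert j J) (c t) x)
       = (\<Sum>T\<in>Pow Q. measure_pmf.expectation (p j) (\<lambda>y. y ^ card T) *
            measure_pmf.expectation (Pi_pmf J dflt p)
              (\<lambda>x. \<Prod>t\<in>Q. mpoly_eval_on J (if t \<in> T then (\<lambda>S. c t (insert j S)) else c t) x))"
proof -
  define G where
    "G T x = (\<Prod>t\<in>Q. mpoly_eval_on J (if t \<in> T then (\<lambda>S. c t (insert j S)) else c t) x)" for T x
  have fin_J: "finite (set_pmf (Pi_pmf J dflt p))"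
    using J fin by (intro finite_set_Pi_pmf) auto
  have "measure_pmf.expectation (Pi_pmf (insert j J) dflt p)
          (\<lambda>x. \<Prod>t\<in>Q. mpoly_eval_on (insert j J) (c t) x)
      = measure_pmf.expectation (p j) (\<lambda>y. measure_pmf.expectation (Pi_pmf J dflt p)
          (\<lambda>x. \<Prod>t\<in>Q. mpoly_eval_on (insert j J) (c t) (x(j := y))))"
    using J fin by (rule expectation_Pi_pmf_insert)
  also have "\<dots> = measure_pmf.expectation (p j)
          (\<lambda>y. measure_pmf.expectation (Pi_pmf J dflt p) (\<lambda>x. \<Sum>T\<in>Pow Q. y ^ card T * G T x))"
    unfolding G_def by (simp only: prod_mpoly_eval_on_insert[OF J Q])
  also have "\<dots> = measure_pmf.expectation (p j)
          (\<lambda>y. \<Sum>T\<in>Pow Q. y ^ card T * measure_pmf.expectation (Pi_pmf J dflt p) (G T))"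
    using fin_J by (simp add: integrable_measure_pmf_finite)
  also have "\<dots> = (\<Sum>T\<in>Pow Q. measure_pmf.expectation (p j) (\<lambda>y. y ^ card T) *
                     measure_pmf.expectation (Pi_pmf J dflt p) (G T))"
    using fin by (simp add: integrable_measure_pmf_finite)
  finally show ?thesis by (simp only: G_def[abs_def])
qed

lemma abs_expectation_prod_mpoly_eval_le:
  fixes p :: "'v \<Rightarrow> real pmf" and c :: "'a \<Rightarrow> 'v set \<Rightarrow> real"
  assumes I: "finite I" and Q: "finite Q"
    and fin: "\<And>i. i \<in> I \<Longrightarrow> finite (set_pmf (p i))"
    and bounded: "\<And>i y. i \<in> I \<Longrightarrow> y \<in> set_pmf (p i) \<Longrightarrow> \<bar>y\<bar> \<le> M"
    and centered: "\<And>i. i \<in> I \<Longrightarrow> measure_pmf.expectation (p i) (\<lambda>y. y) = 0"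
    and M: "M \<ge> 1" and K: "K \<ge> 2 ^ (card Q + 1) * M ^ card Q"
  shows "\<bar>measure_pmf.expectation (Pi_pmf I dflt p) (\<lambda>x. \<Prod>t\<in>Q. mpoly_eval_on I (c t) x)\<bar>
           \<le> (\<Prod>t\<in>Q. sqrt (weighted_coeff_sqnorm K I (c t)))"
  using I fin bounded centered
proof (induction I arbitrary: c rule: finite_induct)
  case empty
  then show ?case
    by (simp add: mpoly_eval_on_def weighted_coeff_sqnorm_def abs_prod)
next
  case (insert j J c)
  have K1: "K \<ge> 1" using one_le_of_two_pow_mult_pow_le[OF M K] .
  let ?c' = "\<lambda>T t. if t \<in> T then (\<lambda>S. c t (insert j S)) else c t"
  let ?m = "\<lambda>T. measure_pmf.expectation (p j) (\<lambda>y. y ^ card T)"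
  let ?e = "\<lambda>T. measure_pmf.expectation (Pi_pmf J dflt p) (\<lambda>x. \<Prod>t\<in>Q. mpoly_eval_on J (?c' T t) x)"
  define \<alpha> where "\<alpha> t = sqrt (weighted_coeff_sqnorm K J (\<lambda>S. c t (insert j S)))" for t
  define \<beta> where "\<beta> t = sqrt (weighted_coeff_sqnorm K J (c t))" for t
  have term_le: "\<bar>?m T * ?e T\<bar> \<le> moment_majorant M (card T) * (prod \<alpha> T * prod \<beta> (Q - T))"
    if T: "T \<in> Pow Q" for T
  proof -
    have "\<bar>?m T\<bar> \<le> moment_majorant M (card T)"
      using insert.prems by (intro abs_moment_le_moment_majorant) auto
    moreover have "\<bar>?e T\<bar> \<le> (\<Prod>t\<in>Q. sqrt (weighted_coeff_sqnorm K J (?c' T t)))"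
      using insert.prems by (intro insert.IH) auto
    moreover have "(\<Prod>t\<in>Q. sqrt (weighted_coeff_sqnorm K J (?c' T t)))
        = (\<Prod>t\<in>Q. if t \<in> T then \<alpha> t else \<beta> t)"
      by (intro prod.cong) (auto simp: \<alpha>_def \<beta>_def)
    moreover have "\<dots> = prod \<alpha> T * prod \<beta> (Q - T)"
      using T by (intro prod_if_mem[OF Q]) auto
    ultimately show ?thesis
      unfolding abs_mult by (intro mult_mono) auto
  qed
  have "\<bar>measure_pmf.expectation (Pi_pmf (insert j J) dflt p)
          (\<lambda>x. \<Prod>t\<in>Q. mpoly_eval_on (insert j J) (c t) x)\<bar> = \<bar>\<Sum>T\<in>Pow Q. ?m T * ?e T\<bar>"
    by (simp only: expectation_prod_mpoly_eval_insert[OF insert.hyps Q insert.prems(1)])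
  also have "\<dots> \<le> (\<Sum>T\<in>Pow Q. moment_majorant M (card T) * (prod \<alpha> T * prod \<beta> (Q - T)))"
    using term_le by (intro order.trans[OF sum_abs] sum_mono) auto
  also have "\<dots> \<le> (\<Prod>t\<in>Q. sqrt (K * (\<alpha> t)\<^sup>2 + (\<beta> t)\<^sup>2))"
    using K1 by (intro sum_Pow_moment_majorant_le_prod_sqrt[OF Q _ _ M K])
      (simp_all add: \<alpha>_def \<beta>_def weighted_coeff_sqnorm_nonneg)
  also have "\<dots> = (\<Prod>t\<in>Q. sqrt (weighted_coeff_sqnorm K (insert j J) (c t)))"
    using K1 insert.hyps
    by (simp add: \<alpha>_def \<beta>_def weighted_coeff_sqnorm_nonneg weighted_coeff_sqnorm_insert)
  finally show ?case .
qed

lemma mpoly_eval_on_diff: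
  "mpoly_eval_on I (\<lambda>S. f S - g S) x = mpoly_eval_on I f x - mpoly_eval_on I g x"
  unfolding mpoly_eval_on_def by (simp add: left_diff_distrib sum_subtractf)

lemma prod_lessThan_if_split:
  fixes a b c :: "'a :: comm_monoid_mult"
  assumes "j < i"
  shows "(\<Prod>t<i. if t < j then a else if t = j then b else c) = a ^ j * b * c ^ (i - 1 - j)"
proof -
  have "(\<Prod>t<i. if t < j then a else if t = j then b else c)
      = (\<Prod>t\<in>{..<i} \<inter> {t. t < j}. a) * (\<Prod>t\<in>{..<i} \<inter> - {t. t < j}. if t = j then b else c)"
    by (rule prod.If_cases) simp
  also have "{..<i} \<inter> {t. t < j} = {..<j}" using assms by auto
  also have "{..<i} \<inter> - {t. t < j} = {j..<i}" by auto
  also have "(\<Prod>t\<in>{j..<i}. if t = j then b else c) = b * (\<Prod>t\<in>{Suc j..<i}. c)"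
    using assms by (simp add: prod.atLeast_Suc_lessThan)
  finally show ?thesis by (simp add: mult.assoc)
qed

lemma power_diff_eq_sum_telescope:
  fixes u v :: "'a :: comm_ring_1"
  shows "u ^ n - v ^ n = (\<Sum>j<n. u ^ j * (u - v) * v ^ (n - 1 - j))"
  by (simp add: power_diff_sumr2 sum_distrib_left mult_ac)

lemma abs_expectation_power_diff_le:
  fixes p :: "'v \<Rightarrow> real pmf" and f g :: "'v set \<Rightarrow> real"
  assumes I: "finite I"
    and fin: "\<And>i. i \<in> I \<Longrightarrow> finite (set_pmf (p i))"
    and bounded: "\<And>i y. i \<in> I \<Longrightarrow> y \<in> set_pmf (p i) \<Longrightarrow> \<bar>y\<bar> \<le> M"
    and centered: "\<And>i. i \<in> I \<Longrightarrow> measure_pmf.expectation (p i) (\<lambda>y. y) = 0"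
    and M: "M \<ge> 1" and K: "K \<ge> 2 ^ (n + 1) * M ^ n"
    and f: "sqrt (weighted_coeff_sqnorm K I f) \<le> B" and g: "sqrt (weighted_coeff_sqnorm K I g) \<le> B"
  shows "\<bar>measure_pmf.expectation (Pi_pmf I dflt p) (\<lambda>x. (mpoly_eval_on I f x) ^ n)
          - measure_pmf.expectation (Pi_pmf I dflt p) (\<lambda>x. (mpoly_eval_on I g x) ^ n)\<bar>
         \<le> n * B ^ (n - 1) * sqrt (weighted_coeff_sqnorm K I (\<lambda>S. f S - g S))"
proof -
  let ?P = "Pi_pmf I dflt p" and ?D = "\<lambda>S. f S - g S"
  let ?ev = "\<lambda>h. mpoly_eval_on I h" and ?nrm = "\<lambda>h. sqrt (weighted_coeff_sqnorm K I h)"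
  \<comment> \<open>\<open>c j\<close> lists the \<open>n\<close> factors of the telescoping term \<open>f ^ j * (f - g) * g ^ (n - 1 - j)\<close>.\<close>
  define c where "c j t = (if t < j then f else if t = j then ?D else g)" for j t :: nat
  have K1: "K \<ge> 1" using one_le_of_two_pow_mult_pow_le[OF M K] .
  have nrm_nonneg: "?nrm h \<ge> 0" for h
    using K1 by (simp add: weighted_coeff_sqnorm_nonneg)
  have B: "B \<ge> 0" using f nrm_nonneg[of f] by linarith
  have integrable: "integrable (measure_pmf ?P) h" for h :: "('v \<Rightarrow> real) \<Rightarrow> real"
    using I fin by (intro integrable_measure_pmf_finite finite_set_Pi_pmf)
  have prod_c: "(\<Prod>t<n. F (c j t)) = F f ^ j * F ?D * F g ^ (n - 1 - j)" if "j < n"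
    for j and F :: "('v set \<Rightarrow> real) \<Rightarrow> real"
  proof -
    have "(\<Prod>t<n. F (c j t)) = (\<Prod>t<n. if t < j then F f else if t = j then F ?D else F g)"
      by (intro prod.cong) (simp_all add: c_def)
    then show ?thesis using prod_lessThan_if_split[OF that] by simp
  qed
  have telescope: "(?ev f x) ^ n - (?ev g x) ^ n = (\<Sum>j<n. \<Prod>t<n. ?ev (c j t) x)" for x
    unfolding power_diff_eq_sum_telescope
    by (intro sum.cong refl) (simp add: prod_c[where F = "\<lambda>h. ?ev h x"] mpoly_eval_on_diff)
  have term_le: "\<bar>measure_pmf.expectation ?P (\<lambda>x. \<Prod>t<n. ?ev (c j t) x)\<bar> \<le> B ^ (n - 1) * ?nrm ?D"
    if "j < n" for j
  proof -
    have "\<bar>measure_pmf.expectation ?P (\<lambda>x. \<Prod>t<n. ?ev (c j t) x)\<bar> \<le> (\<Prod>t<n. ?nrm (c j t))"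
      using K by (intro abs_expectation_prod_mpoly_eval_le[OF I _ fin bounded centered M]) auto
    also have "\<dots> = ?nrm f ^ j * ?nrm ?D * ?nrm g ^ (n - 1 - j)"
      by (rule prod_c[OF that])
    also have "\<dots> \<le> B ^ j * ?nrm ?D * B ^ (n - 1 - j)"
      using f g nrm_nonneg B by (intro mult_mono power_mono) auto
    also have "\<dots> = B ^ (n - 1) * ?nrm ?D"
      using that by (simp add: power_add[symmetric] mult_ac)
    finally show ?thesis .
  qed
  have "measure_pmf.expectation ?P (\<lambda>x. (?ev f x) ^ n) - measure_pmf.expectation ?P (\<lambda>x. (?ev g x) ^ n)
      = (\<Sum>j<n. measure_pmf.expectation ?P (\<lambda>x. \<Prod>t<n. ?ev (c j t) x))"
    by (simp add: telescope integrable flip: Bochner_Integration.integral_diff)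
  also have "\<bar>\<dots>\<bar> \<le> (\<Sum>j<n. B ^ (n - 1) * ?nrm ?D)"
    using term_le by (intro order.trans[OF sum_abs] sum_mono) auto
  also have "\<dots> = n * B ^ (n - 1) * ?nrm ?D"
    by simp
  finally show ?thesis .
qed

lemma mpoly_eval_eq_mpoly_eval_on: "mpoly_eval n c = mpoly_eval_on {..<n} c"
  by (simp add: fun_eq_iff mpoly_eval_def mpoly_eval_on_def)

lemma is_mlpoly_mono: "n \<le> N \<Longrightarrow> is_mlpoly n d c \<Longrightarrow> is_mlpoly N d c"
  unfolding is_mlpoly_def by (meson lessThan_subset_iff order_trans)

lemma is_mlpoly_diff: "is_mlpoly n d f \<Longrightarrow> is_mlpoly n d g \<Longrightarrow> is_mlpoly n d (\<lambda>S. f S - g S)"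
  unfolding is_mlpoly_def by (metis diff_self)

lemma poly_dist_extend:
  assumes "n \<le> N" "is_mlpoly n d c"
  shows "poly_dist X n c = poly_dist X N c"
proof -
  have sub: "{..<n} \<subseteq> {..<N}" using assms(1) by auto
  have "mpoly_eval n c (\<lambda>i. if i \<in> {..<n} then x i else 0) = mpoly_eval N c x" for x
  proof -
    have "mpoly_eval n c (\<lambda>i. if i \<in> {..<n} then x i else 0) = (\<Sum>S\<in>Pow {..<n}. c S * prod x S)"
      unfolding mpoly_eval_def by (intro sum.cong refl arg_cong2[where f = "(*)"] prod.cong) auto
    also have "\<dots> = mpoly_eval N c x"
      unfolding mpoly_eval_def using assms(2) sub
      by (intro sum.mono_neutral_left) (auto simp: is_mlpoly_def)
    finally show ?thesis .
  qed
  then show ?thesis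
    unfolding poly_dist_def Pi_pmf_subset[OF finite_lessThan sub] map_pmf_comp by simp
qed

lemma expectation_power_poly_dist:
  "measure_pmf.expectation (poly_dist X n c) (\<lambda>y. y ^ i)
     = measure_pmf.expectation (Pi_pmf {..<n} 0 (\<lambda>_. X)) (\<lambda>x. (mpoly_eval_on {..<n} c x) ^ i)"
  by (simp add: poly_dist_def mpoly_eval_eq_mpoly_eval_on)

lemma sqrt_weighted_coeff_sqnorm_le:
  assumes "is_mlpoly n d c" "K \<ge> 1"
  shows "sqrt (weighted_coeff_sqnorm K {..<n} c) \<le> sqrt (K ^ d) * coeff_norm n c"
proof -
  have "K ^ card S * (c S)\<^sup>2 \<le> K ^ d * (c S)\<^sup>2" if "S \<in> Pow {..<n}" for S
  proof (cases "c S = 0")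
    case False
    then have "card S \<le> d" using assms(1) by (simp add: is_mlpoly_def)
    then show ?thesis using assms(2) by (intro mult_right_mono power_increasing) auto
  qed simp
  then have "weighted_coeff_sqnorm K {..<n} c \<le> K ^ d * (\<Sum>S\<in>Pow {..<n}. (c S)\<^sup>2)"
    unfolding weighted_coeff_sqnorm_def sum_distrib_left by (rule sum_mono)
  then show ?thesis
    unfolding coeff_norm_def by (metis real_sqrt_le_mono real_sqrt_mult)
qed

lemma coeff_norm_nonneg: "coeff_norm n c \<ge> 0"
  by (simp add: coeff_norm_def sum_nonneg)

lemma coeff_norm_le_add_coeff_norm_diff:
  "coeff_norm n g \<le> coeff_norm n f + coeff_norm n (\<lambda>S. f S - g S)"
proof -
  have "coeff_norm n g = L2_set (\<lambda>S. f S + - (f S - g S)) (Pow {..<n})"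
    by (simp add: coeff_norm_def L2_set_def)
  also have "\<dots> \<le> L2_set f (Pow {..<n}) + L2_set (\<lambda>S. - (f S - g S)) (Pow {..<n})"
    by (rule L2_set_triangle_ineq)
  also have "\<dots> = coeff_norm n f + coeff_norm n (\<lambda>S. f S - g S)"
    by (simp add: coeff_norm_def L2_set_def power2_commute)
  finally show ?thesis .
qed

lemma Mom_le:
  assumes "\<And>i. i \<in> {1..k} \<Longrightarrow>
    \<bar>measure_pmf.expectation Y (\<lambda>y. y ^ i) - measure_pmf.expectation Z (\<lambda>z. z ^ i)\<bar> \<le> B"
  shows "Mom k Y Z \<le> sqrt k * B"
proof -
  have "Mom k Y Z \<le> sqrt (\<Sum>i=1..k. B\<^sup>2)"
    unfolding Mom_def using assms
    by (intro real_sqrt_le_mono sum_mono) (metis abs_ge_zero power2_abs power_mono)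
  also have "\<dots> = sqrt k * \<bar>B\<bar>"
    by (simp add: real_sqrt_mult)
  finally show ?thesis
    using assms[of 1] by (cases "k = 0") (auto simp: Mom_def)
qed

lemma of_nat_mult_power_mono:
  fixes L :: real
  assumes "1 \<le> L" "i \<le> k"
  shows "i * L ^ i \<le> k * L ^ k"
  using assms by (intro mult_mono power_increasing) auto

lemma abs_moment_diff_poly_dist_le:
  fixes X :: "real pmf" and f g :: "nat set \<Rightarrow> real"
  assumes fin: "finite (set_pmf X)" and bounded: "\<And>y. y \<in> set_pmf X \<Longrightarrow> \<bar>y\<bar> \<le> M"
    and centered: "measure_pmf.expectation X (\<lambda>y. y) = 0"
    and M: "M \<ge> 1" and K: "K \<ge> 2 ^ (i + 1) * M ^ i"
    and N: "n \<le> N" and f: "is_mlpoly n d f" and norm_f: "coeff_norm N f = 1"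
    and g: "is_mlpoly N d g" and diff: "coeff_norm N (\<lambda>S. f S - g S) \<le> \<eta>" and "\<eta> \<le> 1"
  shows "\<bar>measure_pmf.expectation (poly_dist X n f) (\<lambda>y. y ^ i)
           - measure_pmf.expectation (poly_dist X N g) (\<lambda>y. y ^ i)\<bar> \<le> i * (2 * sqrt (K ^ d)) ^ i * \<eta>"
proof -
  define L where "L = sqrt (K ^ d)"
  let ?nrm = "\<lambda>h. sqrt (weighted_coeff_sqnorm K {..<N} h)"
  have K1: "K \<ge> 1" using one_le_of_two_pow_mult_pow_le[OF M K] .
  then have L1: "L \<ge> 1" by (simp add: L_def)
  have f_N: "is_mlpoly N d f" using is_mlpoly_mono[OF N f] .
  have "\<eta> \<ge> 0" using coeff_norm_nonneg diff by (rule order.trans)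
  have "?nrm (\<lambda>S. f S - g S) \<le> L * coeff_norm N (\<lambda>S. f S - g S)"
    unfolding L_def by (rule sqrt_weighted_coeff_sqnorm_le[OF is_mlpoly_diff[OF f_N g] K1])
  also have "\<dots> \<le> L * \<eta>" using diff L1 by (intro mult_left_mono) auto
  also have "\<dots> \<le> 2 * L * \<eta>" using L1 \<open>\<eta> \<ge> 0\<close> by (intro mult_right_mono) auto
  finally have nrm_diff: "?nrm (\<lambda>S. f S - g S) \<le> 2 * L * \<eta>" .
  have "?nrm g \<le> L * coeff_norm N g"
    unfolding L_def by (rule sqrt_weighted_coeff_sqnorm_le[OF g K1])
  also have "\<dots> \<le> L * 2"
    using coeff_norm_le_add_coeff_norm_diff[of N g f] norm_f diff \<open>\<eta> \<le> 1\<close> L1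
    by (intro mult_left_mono) auto
  finally have nrm_g: "?nrm g \<le> 2 * L" by simp
  have nrm_f: "?nrm f \<le> 2 * L"
    using sqrt_weighted_coeff_sqnorm_le[OF f_N K1] norm_f L1 unfolding L_def[symmetric] by simp
  have "\<bar>measure_pmf.expectation (Pi_pmf {..<N} 0 (\<lambda>_. X)) (\<lambda>x. (mpoly_eval_on {..<N} f x) ^ i)
          - measure_pmf.expectation (Pi_pmf {..<N} 0 (\<lambda>_. X)) (\<lambda>x. (mpoly_eval_on {..<N} g x) ^ i)\<bar>
         \<le> i * (2 * L) ^ (i - 1) * ?nrm (\<lambda>S. f S - g S)"
    using fin bounded centered M K nrm_f nrm_g by (intro abs_expectation_power_diff_le) auto
  also have "\<dots> \<le> i * (2 * L) ^ (i - 1) * (2 * L * \<eta>)"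
    using nrm_diff L1 \<open>\<eta> \<ge> 0\<close> by (intro mult_left_mono) auto
  also have "\<dots> = i * (2 * L) ^ i * \<eta>"
    by (cases i) (auto simp: mult_ac)
  finally show ?thesis
    by (simp add: expectation_power_poly_dist poly_dist_extend[OF N f] L_def)
qed

theorem lemma9p7:
  fixes X :: "real pmf" and d k :: nat
  assumes "finite (set_pmf X)"
    and "measure_pmf.expectation X (\<lambda>x. x) = 0"
    and "measure_pmf.variance X (\<lambda>x. x) = 1"
    and "k \<ge> 1"
  shows "\<exists>\<xi>::real. \<forall>s N q1 q2 \<eta>.
           N \<ge> d * s \<and> is_mlpoly (d * s) d q1 \<and> coeff_norm N q1 = 1 \<and>
           is_mlpoly N d q2 \<and> coeff_norm N (\<lambda>S. q1 S - q2 S) \<le> \<eta> \<and> \<eta> \<le> 1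
           \<longrightarrow> Mom k (poly_dist X (d * s) q1) (poly_dist X N q2) \<le> \<xi> * \<eta>"
proof -
  obtain M where M: "M \<ge> 1" and bounded: "\<And>y. y \<in> set_pmf X \<Longrightarrow> \<bar>y\<bar> \<le> M"
    using finite_set_pmf_abs_bounded[OF assms(1)] by blast
  define K :: real where "K = 2 ^ (k + 1) * M ^ k"
  have K: "K \<ge> 2 ^ (i + 1) * M ^ i" if "i \<le> k" for i
    unfolding K_def using that M by (intro mult_mono power_increasing) auto
  have "sqrt (K ^ d) \<ge> 1"
    using one_le_of_two_pow_mult_pow_le[OF M K[OF order_refl]] by (simp add: one_le_power)
  then have L: "2 * sqrt (K ^ d) \<ge> 1" by linarith
  show ?thesis
  proof (intro exI[of _ "sqrt k * (k * (2 * sqrt (K ^ d)) ^ k)"] allI impI, elim conjE)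
    fix s N q1 q2 and \<eta> :: real
    assume q: "d * s \<le> N" "is_mlpoly (d * s) d q1" "coeff_norm N q1 = 1" "is_mlpoly N d q2"
      and diff: "coeff_norm N (\<lambda>S. q1 S - q2 S) \<le> \<eta>" and "\<eta> \<le> 1"
    have "\<eta> \<ge> 0" using coeff_norm_nonneg diff by (rule order.trans)
    have "\<bar>measure_pmf.expectation (poly_dist X (d * s) q1) (\<lambda>y. y ^ i)
            - measure_pmf.expectation (poly_dist X N q2) (\<lambda>y. y ^ i)\<bar>
          \<le> k * (2 * sqrt (K ^ d)) ^ k * \<eta>" if i: "i \<in> {1..k}" for i
    proof -
      have "2 ^ (i + 1) * M ^ i \<le> K" using K i by simp
      from abs_moment_diff_poly_dist_le[OF assms(1) bounded assms(2) M this q diff \<open>\<eta> \<le> 1\<close>]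
      show ?thesis
        using mult_right_mono[OF of_nat_mult_power_mono[OF L] \<open>\<eta> \<ge> 0\<close>, of i k] i by simp
    qed
    then show "Mom k (poly_dist X (d * s) q1) (poly_dist X N q2)
               \<le> sqrt k * (k * (2 * sqrt (K ^ d)) ^ k) * \<eta>"
      using Mom_le by (metis mult.assoc)
  qed
qed

end
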